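(* For every natural number $T$, $$\int_GV_T(y)\,\gamma(dy,du)\le\int_Gk(y,u)\,\gamma(dy,du)\quad\text{for all }\gamma\in W,$$ and for every $\alpha\in(0,1)$, $$\int_Gh_\alpha(y)\,\gamma(dy,du)\le\int_Gk(y,u)\,\gamma(dy,du)\quad\text{for all }\gamma\in W.$$
   Context: Let $Y\subset\mathbb{R}^m$ be nonempty compact, $U_0$ a compact metric space, $U(\cdot):Y\rightsquigarrow U_0$ upper semicontinuous and compact-valued, and $f:\mathbb{R}^m\times U_0\to\mathbb{R}^m$, $k:\mathbb{R}^m\times U_0\to\mathbb{R}$ continuous. Put $A(y):=\{u\in U(y): f(y,u)\in Y\}$ and $G:=\{(y,u):y\in Y,\ u\in A(y)\}$. Standing assumption: $A(y)\ne\emptyset$ for all $y\in Y$. For $y_0\in Y$, an admissible process on $\{0,\dots,T-1\}$ (respectively on $\{0,1,\dots\}$) is a pair $(y(t),u(t))$ with $y(0)=y_0$, $u(t)\in A(y(t))$ and $y(t+1)=f(y(t),u(t))$. The controls of such processes form $\mathcal U_T(y_0)$ (respectively $\mathcal U(y_0)$). Value functions (these minima are attained and the functions are lower semicontinuous): $$V_T(y_0):=\frac1T\min_{u\in\mathcal U_T(y_0)}\sum_{t=0}^{T-1}k(y(t),u(t)),\qquad h_\alpha(y_0):=(1-\alpha)\min_{u\in\mathcal U(y_0)}\sum_{t=0}^\infty\alpha^tk(y(t),u(t)).$$ $\mathcal P(G)$ denotes the Borel probability measures on $G$, and $W:=\{\gamma\in\mathcal P(G):\int_G(\varphi(f(y,u))-\varphi(y))\,\gamma(dy,du)=0\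 \forall\varphi\in C(Y)\}$. *)

theory Defs
  imports "HOL-Probability.Probability"
begin

definition adm_set :: "('m \<Rightarrow> 'u set) \<Rightarrow> ('m \<Rightarrow> 'u \<Rightarrow> 'm) \<Rightarrow> 'm set \<Rightarrow> 'm \<Rightarrow> 'u set" where
  "adm_set U f Y y = {u \<in> U y. f y u \<in> Y}"

definition graph_G :: "('m \<Rightarrow> 'u set) \<Rightarrow> ('m \<Rightarrow> 'u \<Rightarrow> 'm) \<Rightarrow> 'm set \<Rightarrow> ('m \<times> 'u) set" where
  "graph_G U f Y = {(y, u). y \<in> Y \<and> u \<in> adm_set U f Y y}"

definition usc_on :: "'m::metric_space set \<Rightarrow> ('m \<Rightarrow> 'u::topological_space set) \<Rightarrow> bool" where
  "usc_on Y U \<longleftrightarrow> (\<forall>y\<in>Y. \<forall>V. open V \<and> U y \<subseteq> V \<longrightarrow>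
      (\<exists>e>0. \<forall>y'\<in>Y. dist y' y < e \<longrightarrow> U y' \<subseteq> V))"

definition V_T :: "('m \<Rightarrow> 'u set) \<Rightarrow> ('m \<Rightarrow> 'u \<Rightarrow> 'm) \<Rightarrow> ('m \<Rightarrow> 'u \<Rightarrow> real) \<Rightarrow> 'm set
    \<Rightarrow> nat \<Rightarrow> 'm \<Rightarrow> real" where
  "V_T U f k Y T y0 = (1 / real T) * Inf {(\<Sum>t<T. k (y t) (u t)) | y u.
      y 0 = y0 \<and> (\<forall>t<T. u t \<in> adm_set U f Y (y t) \<and> y (Suc t) = f (y t) (u t))}"

definition h_disc :: "('m \<Rightarrow> 'u set) \<Rightarrow> ('m \<Rightarrow> 'u \<Rightarrow> 'm) \<Rightarrow> ('m \<Rightarrow> 'u \<Rightarrow> real) \<Rightarrow> 'm set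
    \<Rightarrow> real \<Rightarrow> 'm \<Rightarrow> real" where
  "h_disc U f k Y \<alpha> y0 = (1 - \<alpha>) * Inf {(\<Sum>t. \<alpha> ^ t * k (y t) (u t)) | y u.
      y 0 = y0 \<and> (\<forall>t. u t \<in> adm_set U f Y (y t) \<and> y (Suc t) = f (y t) (u t))}"

definition prob_measures_on :: "('a::topological_space) set \<Rightarrow> 'a measure set" where
  "prob_measures_on G = {\<gamma>. prob_space \<gamma> \<and> space \<gamma> = G \<and> sets \<gamma> = sets (restrict_space borel G)}"

definition W_set :: "('m::topological_space \<Rightarrow> 'u::topological_space set) \<Rightarrow> ('m \<Rightarrow> 'u \<Rightarrow> 'm)
    \<Rightarrow> 'm set \<Rightarrow> ('m \<times> 'u) measure set" where
  "W_set U f Y = {\<gamma> \<in> prob_measures_on (graph_G U f Y).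
      \<forall>\<phi> :: 'm \<Rightarrow> real. continuous_on Y \<phi> \<longrightarrow>
        (\<integral>z. \<phi> (f (fst z) (snd z)) - \<phi> (fst z) \<partial>\<gamma>) = 0}"

end

theory Submission
  imports Defs
begin

text \<open>
  Both value functions are instances of \<open>J\<^sub>w(y) = inf (\<Sum>t. w t * k (y t) (u t))\<close>, the infimum
  taken over admissible processes starting at \<open>y\<close>, for summable nonnegative weights \<open>w\<close>.
  Choosing the first control \<open>u \<in> A(y)\<close> gives the Bellman inequality
  \<open>J\<^sub>w(y) \<le> w 0 * k(y, u) + c * J\<^sub>w\<^sub>'(f(y, u))\<close> whenever \<open>w (t + 1) = c * w' t\<close>.
  For \<open>\<gamma> \<in> W\<close> the images of \<open>\<gamma>\<close> under \<open>(y, u) \<mapsto> y\<close> and \<open>(y, u) \<mapsto> f(y, u)\<close> give the same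
  integral to every continuous function and hence coincide, so integrating the Bellman
  inequality yields \<open>\<integral>J\<^sub>w d\<gamma> \<le> w 0 * \<integral>k d\<gamma> + c * \<integral>J\<^sub>w\<^sub>' d\<gamma>\<close>.  With \<open>w\<close> the indicator of
  \<open>{..<T}\<close> and \<open>c = 1\<close> this telescopes to \<open>T * \<integral>V\<^sub>T d\<gamma> \<le> T * \<integral>k d\<gamma>\<close>; with \<open>w = w' = \<alpha>\<^sup>t\<close> and
  \<open>c = \<alpha>\<close> it is a fixed-point inequality for \<open>\<integral>h\<^sub>\<alpha> d\<gamma> / (1 - \<alpha>)\<close>.

  The integrals exist because \<open>J\<^sub>w\<close> is lower semicontinuous on \<open>Y\<close>: processes starting at a
  convergent sequence of points have a pointwise convergent subsequence, whose limit is
  admissible by upper semicontinuity of \<open>U\<close>, and the costs converge by Tannery's theorem.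
\<close>

lemma usc_on_closed_graph:
  fixes U :: "'m::metric_space \<Rightarrow> 'u::metric_space set"
  assumes "usc_on Y U" "closed (U y)" "y \<in> Y"
    and yn: "yn \<longlonglongrightarrow> y" "\<And>n. yn n \<in> Y"
    and un: "un \<longlonglongrightarrow> u" "\<And>n. un n \<in> U (yn n)"
  shows "u \<in> U y"
proof (rule ccontr)
  assume "u \<notin> U y"
  then obtain e where "e > 0" "ball u e \<subseteq> - U y"
    using assms(2) open_contains_ball by (metis ComplI closed_def)
  then have "U y \<subseteq> - cball u (e / 2)" by (auto simp: subset_eq)
  then obtain d where "d > 0" and d: "\<forall>y'\<in>Y. dist y' y < d \<longrightarrow> U y' \<subseteq> - cball u (e / 2)"
    using assms(1,3) unfolding usc_on_def by (meson closed_cball open_Compl)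
  have "eventually (\<lambda>n. dist (yn n) y < d) sequentially" using tendstoD[OF yn(1) \<open>d > 0\<close>] .
  moreover have "eventually (\<lambda>n. dist (un n) u < e / 2) sequentially"
    using tendstoD[OF un(1), of "e / 2"] \<open>e > 0\<close> by simp
  ultimately have "eventually (\<lambda>n. False) sequentially"
    by eventually_elim (use d yn(2) un(2) in \<open>force simp: dist_commute\<close>)
  then show False by simp
qed

lemma tendsto_infdist_cutoff_indicator:
  assumes "closed C" "C \<noteq> {}"
  shows "(\<lambda>n. max 0 (1 - real n * infdist x C)) \<longlonglongrightarrow> indicator C x"
proof (cases "x \<in> C")
  case False
  then have "infdist x C > 0"
    using in_closed_iff_infdist_zero[OF assms] infdist_nonneg[of x C] by (metis order_le_less)
  then obtain N where "1 < real N * infdist x C"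
    by (metis mult.commute pos_divide_less_eq reals_Archimedean2)
  then have "max 0 (1 - real n * infdist x C) = indicator C x" if "n \<ge> N" for n
    using False \<open>infdist x C > 0\<close> that
    by (smt (verit, best) indicator_simps(2) mult_right_mono of_nat_mono)
  then show ?thesis by (intro tendsto_eventually eventually_sequentiallyI)
qed simp

lemma compact_Pi_UNIV_nat:
  fixes K :: "'a::topological_space set"
  assumes "compact K"
  shows "compact (Pi UNIV (\<lambda>_::nat. K))"
proof -
  have "compactin (product_topology (\<lambda>_::nat. euclidean) UNIV) (PiE UNIV (\<lambda>_::nat. K))"
    using assms by (subst compactin_PiE) auto
  then show ?thesis by (metis euclidean_product_topology compactin_euclidean_iff PiE_UNIV_domain)
qed

lemma measure_eqI_integral_bounded_continuous:
  fixes M N :: "'a::metric_space measure"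
  assumes M: "finite_measure M" "sets M = sets borel" and N: "finite_measure N" "sets N = sets borel"
    and eq: "\<And>\<phi> :: 'a \<Rightarrow> real. continuous_on UNIV \<phi> \<Longrightarrow> (\<And>x. \<bar>\<phi> x\<bar> \<le> 1) \<Longrightarrow>
      (\<integral>x. \<phi> x \<partial>M) = (\<integral>x. \<phi> x \<partial>N)"
  shows "M = N"
proof (rule measure_eqI_generator_eq[where \<Omega>=UNIV and E="Collect closed" and A="\<lambda>_. UNIV"])
  show "Int_stable (Collect closed)" by (auto simp: Int_stable_def)
  show "sets M = sigma_sets UNIV (Collect closed)" "sets N = sigma_sets UNIV (Collect closed)"
    using M N by (simp_all add: borel_eq_closed)
  show "emeasure M UNIV \<noteq> \<infinity>" for i :: nat using finite_measure.emeasure_finite[OF M(1)] by simp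
  fix C :: "'a set" assume "C \<in> Collect closed"
  then have "closed C" by simp
  show "emeasure M C = emeasure N C"
  proof (cases "C = {}")
    case False
    define \<phi> where "\<phi> n x = max 0 (1 - real n * infdist x C)" for n x
    have \<phi>_cont: "continuous_on UNIV (\<phi> n)" for n unfolding \<phi>_def by (intro continuous_intros)
    have \<phi>_bound: "\<bar>\<phi> n x\<bar> \<le> 1" for n x
      using infdist_nonneg[of x C] by (auto simp: \<phi>_def)
    have approx: "(\<lambda>n. \<integral>x. \<phi> n x \<partial>L) \<longlonglongrightarrow> measure L C"
      if L: "finite_measure L" "sets L = sets borel" for L :: "'a measure"
    proof -
      interpret L: finite_measure L by (rule L(1))
      have "(\<lambda>n. \<integral>x. \<phi> n x \<partial>L) \<longlonglongrightarrow> (\<integral>x. indicator C x \<partial>L)"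
      proof (rule integral_dominated_convergence[where w="\<lambda>_. 1"])
        show "(indicator C :: 'a \<Rightarrow> real) \<in> borel_measurable L" "\<phi> n \<in> borel_measurable L" for n
          using \<open>closed C\<close> borel_measurable_continuous_onI[OF \<phi>_cont]
          by (auto simp: measurable_cong_sets[OF L(2) refl])
        show "AE x in L. (\<lambda>n. \<phi> n x) \<longlonglongrightarrow> indicator C x"
          using tendsto_infdist_cutoff_indicator[OF \<open>closed C\<close> False] by (simp add: \<phi>_def)
        show "AE x in L. norm (\<phi> n x) \<le> 1" for n using \<phi>_bound by simp
      qed simp
      then show ?thesis using \<open>closed C\<close> L(2) by (simp add: sets_eq_imp_space_eq)
    qed
    have "measure M C = measure N C"
      using LIMSEQ_unique[OF approx[OF M] approx[OF N, folded eq[OF \<phi>_cont \<phi>_bound]]] .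
    then show ?thesis
      using M N \<open>closed C\<close> by (simp add: finite_measure.emeasure_eq_measure)
  qed simp
qed auto

lemma W_setD:
  assumes "\<gamma> \<in> W_set U f Y"
  shows "prob_space \<gamma>" "space \<gamma> = graph_G U f Y"
    "sets \<gamma> = sets (restrict_space borel (graph_G U f Y))"
    "\<And>\<phi> :: _ \<Rightarrow> real. continuous_on Y \<phi> \<Longrightarrow> (\<integral>z. \<phi> (f (fst z) (snd z)) - \<phi> (fst z) \<partial>\<gamma>) = 0"
  using assms unfolding W_set_def prob_measures_on_def by auto

lemma W_set_borel_measurable_continuous:
  fixes h :: "'m::topological_space \<times> 'u::topological_space \<Rightarrow> 'b::topological_space"
  assumes "\<gamma> \<in> W_set U f Y" "continuous_on (graph_G U f Y) h"
  shows "h \<in> borel_measurable \<gamma>"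
  using borel_measurable_continuous_on_restrict[OF assms(2)]
  by (simp add: measurable_cong_sets[OF W_setD(3)[OF assms(1)] refl])

locale control_system =
  fixes Y :: "'m::metric_space set"
    and U0 :: "'u::metric_space set"
    and U :: "'m \<Rightarrow> 'u set"
    and f :: "'m \<Rightarrow> 'u \<Rightarrow> 'm"
    and k :: "'m \<Rightarrow> 'u \<Rightarrow> real"
  assumes compact_Y: "compact Y"
    and compact_U0: "compact U0"
    and U_subset: "\<And>y. y \<in> Y \<Longrightarrow> U y \<subseteq> U0"
    and compact_U: "\<And>y. y \<in> Y \<Longrightarrow> compact (U y)"
    and usc_U: "usc_on Y U"
    and continuous_f: "continuous_on (UNIV \<times> U0) (\<lambda>(y, u). f y u)"
    and continuous_k: "continuous_on (UNIV \<times> U0) (\<lambda>(y, u). k y u)"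
    and adm_set_nonempty: "\<And>y. y \<in> Y \<Longrightarrow> adm_set U f Y y \<noteq> {}"
begin

definition adm_proc :: "'m \<Rightarrow> ((nat \<Rightarrow> 'm) \<times> (nat \<Rightarrow> 'u)) set" where
  "adm_proc y0 = {(ys, us). ys 0 = y0 \<and> (\<forall>t. us t \<in> adm_set U f Y (ys t) \<and> ys (Suc t) = f (ys t) (us t))}"

definition cost :: "(nat \<Rightarrow> real) \<Rightarrow> (nat \<Rightarrow> 'm) \<Rightarrow> (nat \<Rightarrow> 'u) \<Rightarrow> real" where
  "cost w ys us = (\<Sum>t. w t * k (ys t) (us t))"

definition opt_cost :: "(nat \<Rightarrow> real) \<Rightarrow> 'm \<Rightarrow> real" where
  "opt_cost w y0 = Inf ((\<lambda>(ys, us). cost w ys us) ` adm_proc y0)"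

definition weights :: "(nat \<Rightarrow> real) \<Rightarrow> bool" where
  "weights w \<longleftrightarrow> (\<forall>t. 0 \<le> w t) \<and> summable w"

lemma adm_proc_in:
  assumes "(ys, us) \<in> adm_proc y0" "y0 \<in> Y"
  shows "ys t \<in> Y" "us t \<in> U (ys t)" "us t \<in> U0"
proof -
  show "ys t \<in> Y" using assms by (induction t) (auto simp: adm_proc_def adm_set_def)
  then show "us t \<in> U (ys t)" "us t \<in> U0"
    using assms U_subset unfolding adm_proc_def adm_set_def by blast+
qed

lemma adm_proc_nonempty:
  assumes "y0 \<in> Y"
  shows "adm_proc y0 \<noteq> {}"
proof -
  obtain c where c: "\<And>y. y \<in> Y \<Longrightarrow> c y \<in> adm_set U f Y y"
    using bchoice[of Y "\<lambda>y u. u \<in> adm_set U f Y y"] adm_set_nonempty by blast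
  define ys where "ys = rec_nat y0 (\<lambda>_ y. f y (c y))"
  have "ys t \<in> Y" for t
    by (induction t) (use assms c in \<open>auto simp: ys_def adm_set_def\<close>)
  then have "(ys, c \<circ> ys) \<in> adm_proc y0" using c by (auto simp: adm_proc_def ys_def)
  then show ?thesis by blast
qed

definition k_bound :: real where
  "k_bound = (SOME B. 0 \<le> B \<and> (\<forall>y\<in>Y. \<forall>u\<in>U0. \<bar>k y u\<bar> \<le> B))"

lemma k_bound: "0 \<le> k_bound" "y \<in> Y \<Longrightarrow> u \<in> U0 \<Longrightarrow> \<bar>k y u\<bar> \<le> k_bound"
proof -
  have "compact ((\<lambda>(y, u). k y u) ` (Y \<times> U0))"
    using compact_Y compact_U0
    by (intro compact_continuous_image continuous_on_subset[OF continuous_k] compact_Times) auto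
  then obtain B where B: "\<forall>x\<in>(\<lambda>(y, u). k y u) ` (Y \<times> U0). norm x \<le> B"
    using compact_imp_bounded bounded_iff by blast
  have "\<bar>k y u\<bar> \<le> max B 0" if "y \<in> Y" "u \<in> U0" for y u
  proof -
    have "k y u \<in> (\<lambda>(y, u). k y u) ` (Y \<times> U0)" using that by force
    then show ?thesis using B by (metis max.coboundedI1 real_norm_def)
  qed
  then have "\<exists>B. 0 \<le> B \<and> (\<forall>y\<in>Y. \<forall>u\<in>U0. \<bar>k y u\<bar> \<le> B)"
    by (intro exI[of _ "max B 0"]) simp
  then have "0 \<le> k_bound \<and> (\<forall>y\<in>Y. \<forall>u\<in>U0. \<bar>k y u\<bar> \<le> k_bound)"
    unfolding k_bound_def by (rule someI_ex)
  then show "0 \<le> k_bound" "y \<in> Y \<Longrightarrow> u \<in> U0 \<Longrightarrow> \<bar>k y u\<bar> \<le> k_bound" by simp_all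
qed

lemma abs_cost_term_le:
  assumes "weights w" "(ys, us) \<in> adm_proc y0" "y0 \<in> Y"
  shows "\<bar>w t * k (ys t) (us t)\<bar> \<le> k_bound * w t"
proof -
  have "\<bar>k (ys t) (us t)\<bar> \<le> k_bound" using adm_proc_in[OF assms(2,3)] k_bound(2) by blast
  moreover have "0 \<le> w t" using assms(1) by (simp add: weights_def)
  ultimately show ?thesis by (metis abs_mult abs_of_nonneg mult.commute mult_left_mono)
qed

lemma summable_cost:
  assumes "weights w" "(ys, us) \<in> adm_proc y0" "y0 \<in> Y"
  shows "summable (\<lambda>t. w t * k (ys t) (us t))"
proof (rule summable_comparison_test')
  show "summable (\<lambda>t. k_bound * w t)" using assms(1) by (simp add: weights_def)
  show "norm (w t * k (ys t) (us t)) \<le> k_bound * w t" for t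
    using abs_cost_term_le[OF assms] by simp
qed

lemma abs_cost_le:
  assumes "weights w" "(ys, us) \<in> adm_proc y0" "y0 \<in> Y"
  shows "\<bar>cost w ys us\<bar> \<le> k_bound * suminf w"
proof -
  have "norm (cost w ys us) \<le> (\<Sum>t. k_bound * w t)"
    unfolding cost_def
  proof (rule norm_suminf_le)
    show "summable (\<lambda>t. k_bound * w t)" using assms(1) by (simp add: weights_def)
    show "norm (w t * k (ys t) (us t)) \<le> k_bound * w t" for t
      using abs_cost_term_le[OF assms] by simp
  qed
  also have "\<dots> = k_bound * suminf w" using assms(1) by (simp add: weights_def suminf_mult)
  finally show ?thesis by simp
qed

lemma bdd_below_costs:
  assumes "weights w" "y0 \<in> Y"
  shows "bdd_below ((\<lambda>(ys, us). cost w ys us) ` adm_proc y0)"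
proof (rule bdd_belowI)
  fix x assume "x \<in> (\<lambda>(ys, us). cost w ys us) ` adm_proc y0"
  then obtain ys us where "(ys, us) \<in> adm_proc y0" "x = cost w ys us" by auto
  then show "- (k_bound * suminf w) \<le> x"
    using abs_cost_le[OF assms(1) _ assms(2), of ys us] by (simp add: abs_le_iff)
qed

lemma opt_cost_le_cost:
  assumes "weights w" "y0 \<in> Y" "(ys, us) \<in> adm_proc y0"
  shows "opt_cost w y0 \<le> cost w ys us"
  unfolding opt_cost_def
  by (rule cInf_lower[OF _ bdd_below_costs[OF assms(1,2)]]) (use assms(3) in force)

lemma opt_cost_greatest:
  assumes "y0 \<in> Y" "\<And>ys us. (ys, us) \<in> adm_proc y0 \<Longrightarrow> a \<le> cost w ys us"
  shows "a \<le> opt_cost w y0"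
  unfolding opt_cost_def
  by (rule cInf_greatest) (use adm_proc_nonempty[OF assms(1)] assms(2) in auto)

lemma abs_opt_cost_le:
  assumes "weights w" "y0 \<in> Y"
  shows "\<bar>opt_cost w y0\<bar> \<le> k_bound * suminf w"
proof -
  obtain ys us where p: "(ys, us) \<in> adm_proc y0" using adm_proc_nonempty[OF assms(2)] by auto
  have "- (k_bound * suminf w) \<le> opt_cost w y0"
  proof (rule opt_cost_greatest[OF assms(2)])
    fix ys us assume "(ys, us) \<in> adm_proc y0"
    from abs_cost_le[OF assms(1) this assms(2)] show "- (k_bound * suminf w) \<le> cost w ys us"
      by (simp add: abs_le_iff)
  qed
  moreover have "opt_cost w y0 \<le> k_bound * suminf w"
    using opt_cost_le_cost[OF assms p] abs_cost_le[OF assms(1) p assms(2)] by simp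
  ultimately show ?thesis by simp
qed

lemma opt_cost_approx:
  assumes "weights w" "y0 \<in> Y" "e > 0"
  obtains ys us where "(ys, us) \<in> adm_proc y0" "cost w ys us < opt_cost w y0 + e"
proof -
  have "Inf ((\<lambda>(ys, us). cost w ys us) ` adm_proc y0) < opt_cost w y0 + e"
    using assms(3) by (simp add: opt_cost_def)
  from cInf_lessD[OF _ this] show ?thesis
    using adm_proc_nonempty[OF assms(2)] that by auto
qed

lemma opt_cost_bellman:
  assumes w: "weights w" and w': "weights w'" and "c \<ge> 0" and shift: "\<And>t. w (Suc t) = c * w' t"
    and y: "y \<in> Y" and u: "u \<in> adm_set U f Y y"
  shows "opt_cost w y \<le> w 0 * k y u + c * opt_cost w' (f y u)"
proof -
  have y': "f y u \<in> Y" using u by (simp add: adm_set_def)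
  have step: "opt_cost w y \<le> w 0 * k y u + c * cost w' ys us" if p: "(ys, us) \<in> adm_proc (f y u)" for ys us
  proof -
    have p': "(case_nat y ys, case_nat u us) \<in> adm_proc y"
      using p u by (auto simp: adm_proc_def split: nat.splits)
    have "cost w (case_nat y ys) (case_nat u us) = w 0 * k y u + (\<Sum>t. w (Suc t) * k (ys t) (us t))"
      unfolding cost_def using suminf_split_head[OF summable_cost[OF w p' y]] by simp
    also have "(\<Sum>t. w (Suc t) * k (ys t) (us t)) = c * cost w' ys us"
      unfolding cost_def shift using suminf_mult[OF summable_cost[OF w' p y'], of c]
      by (simp add: mult.assoc)
    finally show ?thesis using opt_cost_le_cost[OF w y p'] by simp
  qed
  show ?thesis
  proof (cases "c = 0")
    case True
    obtain ys us where "(ys, us) \<in> adm_proc (f y u)" using adm_proc_nonempty[OF y'] by auto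
    then show ?thesis using step True by fastforce
  next
    case False
    then have "c > 0" using \<open>c \<ge> 0\<close> by simp
    have "(opt_cost w y - w 0 * k y u) / c \<le> opt_cost w' (f y u)"
    proof (rule opt_cost_greatest[OF y'])
      fix ys us assume "(ys, us) \<in> adm_proc (f y u)"
      from step[OF this] show "(opt_cost w y - w 0 * k y u) / c \<le> cost w' ys us"
        using \<open>c > 0\<close> by (simp add: pos_divide_le_eq mult.commute)
    qed
    then show ?thesis using \<open>c > 0\<close> by (simp add: pos_divide_le_eq mult.commute)
  qed
qed

lemma adm_proc_convergent_subseq:
  assumes xs: "\<And>n. xs n \<in> Y" "xs \<longlonglongrightarrow> x" "x \<in> Y"
    and p: "\<And>n. (ys n, us n) \<in> adm_proc (xs n)"
  obtains r ys0 us0 where "strict_mono r" "(ys0, us0) \<in> adm_proc x"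
    "\<And>t. (\<lambda>n. ys (r n) t) \<longlonglongrightarrow> ys0 t" "\<And>t. (\<lambda>n. us (r n) t) \<longlonglongrightarrow> us0 t"
proof -
  define z where "z n = (\<lambda>t. (ys n t, us n t))" for n
  have "\<forall>n. z n \<in> Pi UNIV (\<lambda>_. Y \<times> U0)"
    using adm_proc_in[OF p xs(1)] by (auto simp: z_def)
  from seq_compactE[OF compact_imp_seq_compact[OF
        compact_Pi_UNIV_nat[OF compact_Times[OF compact_Y compact_U0]]] this]
  obtain l r where l: "l \<in> Pi UNIV (\<lambda>_. Y \<times> U0)" and r: "strict_mono r" and lim: "(z \<circ> r) \<longlonglongrightarrow> l"
    by blast
  have lim_t: "(\<lambda>n. z (r n) t) \<longlonglongrightarrow> l t" for t
    using continuous_on_tendsto_compose[OF continuous_on_product_coordinates[of t] lim]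
    by (simp add: o_def)
  define ys0 where "ys0 t = fst (l t)" for t
  define us0 where "us0 t = snd (l t)" for t
  have ys_lim: "(\<lambda>n. ys (r n) t) \<longlonglongrightarrow> ys0 t" for t
    using tendsto_fst[OF lim_t[of t]] by (simp add: z_def ys0_def)
  have us_lim: "(\<lambda>n. us (r n) t) \<longlonglongrightarrow> us0 t" for t
    using tendsto_snd[OF lim_t[of t]] by (simp add: z_def us0_def)
  have "l t \<in> Y \<times> U0" for t using l by blast
  then have ys0_in: "ys0 t \<in> Y" and us0_in: "us0 t \<in> U0" for t
    by (auto simp: ys0_def us0_def mem_Times_iff)
  have "ys0 0 = x"
  proof -
    have "(\<lambda>n. ys (r n) 0) \<longlonglongrightarrow> x"
      using p LIMSEQ_subseq_LIMSEQ[OF xs(2) r] by (simp add: adm_proc_def o_def)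
    from LIMSEQ_unique[OF ys_lim this] show ?thesis .
  qed
  moreover have "ys0 (Suc t) = f (ys0 t) (us0 t)" for t
  proof -
    have "(\<lambda>n. f (ys (r n) t) (us (r n) t)) \<longlonglongrightarrow> f (ys0 t) (us0 t)"
      using continuous_on_tendsto_compose[OF continuous_f tendsto_Pair[OF ys_lim us_lim]]
        us0_in adm_proc_in(3)[OF p xs(1)] by auto
    moreover have "f (ys (r n) t) (us (r n) t) = ys (r n) (Suc t)" for n
      using p by (simp add: adm_proc_def)
    ultimately have "(\<lambda>n. ys (r n) (Suc t)) \<longlonglongrightarrow> f (ys0 t) (us0 t)" by simp
    from LIMSEQ_unique[OF ys_lim this] show ?thesis .
  qed
  moreover have "us0 t \<in> U (ys0 t)" for t
    by (rule usc_on_closed_graph[OF usc_U compact_imp_closed[OF compact_U[OF ys0_in]] ys0_in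
        ys_lim _ us_lim]) (use adm_proc_in[OF p xs(1)] in auto)
  ultimately have "(ys0, us0) \<in> adm_proc x"
    using ys0_in by (simp add: adm_proc_def adm_set_def) (metis ys0_in)
  then show ?thesis using that r ys_lim us_lim by blast
qed

lemma cost_tendsto:
  assumes w: "weights w"
    and p: "\<And>n. (ys n, us n) \<in> adm_proc (xs n)" "\<And>n. xs n \<in> Y"
    and p0: "(ys0, us0) \<in> adm_proc x" "x \<in> Y"
    and ys_lim: "\<And>t. (\<lambda>n. ys n t) \<longlonglongrightarrow> ys0 t" and us_lim: "\<And>t. (\<lambda>n. us n t) \<longlonglongrightarrow> us0 t"
  shows "(\<lambda>n. cost w (ys n) (us n)) \<longlonglongrightarrow> cost w ys0 us0"
proof -
  have lim: "(\<lambda>n. w t * k (ys n t) (us n t)) \<longlonglongrightarrow> w t * k (ys0 t) (us0 t)" for t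
  proof -
    have "(\<lambda>n. (\<lambda>(y, u). k y u) (ys n t, us n t)) \<longlonglongrightarrow> (\<lambda>(y, u). k y u) (ys0 t, us0 t)"
      using adm_proc_in[OF p0] adm_proc_in[OF p]
      by (intro continuous_on_tendsto_compose[OF continuous_k tendsto_Pair[OF ys_lim us_lim]]) auto
    then show ?thesis by (intro tendsto_mult_left) simp
  qed
  have bound: "norm (w t * k (ys n t) (us n t)) \<le> k_bound * w t" for t n
    using abs_cost_term_le[OF w p] by simp
  have "summable (\<lambda>t. k_bound * w t)" using w by (simp add: weights_def)
  from tannerys_theorem[where a="\<lambda>t n. w t * k (ys n t) (us n t)"
      and b="\<lambda>t. w t * k (ys0 t) (us0 t)" and M="\<lambda>t. k_bound * w t" and F=sequentially,
      OF lim _ this] bound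
  show ?thesis unfolding cost_def by (simp add: always_eventually)
qed

lemma closed_opt_cost_sublevel:
  assumes w: "weights w"
  shows "closed {x \<in> Y. opt_cost w x \<le> a}"
  unfolding closed_sequential_limits
proof (intro allI impI, elim conjE)
  fix xs x assume xs: "\<forall>n. xs n \<in> {x \<in> Y. opt_cost w x \<le> a}" and lim: "xs \<longlonglongrightarrow> x"
  then have xs_in: "\<And>n. xs n \<in> Y" and le_a: "\<And>n. opt_cost w (xs n) \<le> a" by auto
  have x: "x \<in> Y"
    using closed_sequentially[OF compact_imp_closed[OF compact_Y] _ lim] xs_in by blast
  have "\<exists>ys us. (ys, us) \<in> adm_proc (xs n) \<and> cost w ys us < opt_cost w (xs n) + inverse (Suc n)" for n
    by (rule opt_cost_approx[OF w xs_in[of n]]) auto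
  then obtain ys us where p: "\<And>n. (ys n, us n) \<in> adm_proc (xs n)"
    and near: "\<And>n. cost w (ys n) (us n) < opt_cost w (xs n) + inverse (Suc n)"
    by metis
  obtain r ys0 us0 where r: "strict_mono r" and p0: "(ys0, us0) \<in> adm_proc x"
    and ys_lim: "\<And>t. (\<lambda>n. ys (r n) t) \<longlonglongrightarrow> ys0 t" and us_lim: "\<And>t. (\<lambda>n. us (r n) t) \<longlonglongrightarrow> us0 t"
    using adm_proc_convergent_subseq[OF xs_in lim x p] by blast
  have "(\<lambda>n. cost w (ys (r n)) (us (r n))) \<longlonglongrightarrow> cost w ys0 us0"
    using p xs_in by (intro cost_tendsto[OF w _ _ p0 x ys_lim us_lim])
  moreover have "(\<lambda>n. a + inverse (real (Suc (r n)))) \<longlonglongrightarrow> a + 0"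
    using LIMSEQ_subseq_LIMSEQ[OF LIMSEQ_inverse_real_of_nat r]
    by (intro tendsto_add tendsto_const) (simp add: o_def)
  moreover have "cost w (ys (r n)) (us (r n)) \<le> a + inverse (real (Suc (r n)))" for n
    using near[of "r n"] le_a[of "r n"] by simp
  ultimately have "cost w ys0 us0 \<le> a" by (intro LIMSEQ_le) auto
  then show "x \<in> {x \<in> Y. opt_cost w x \<le> a}" using opt_cost_le_cost[OF w x p0] x by simp
qed

definition opt_cost_ext :: "(nat \<Rightarrow> real) \<Rightarrow> 'm \<Rightarrow> real" where
  "opt_cost_ext w x = (if x \<in> Y then opt_cost w x else 0)"

lemma borel_measurable_opt_cost_ext:
  assumes "weights w"
  shows "opt_cost_ext w \<in> borel_measurable borel"
  unfolding borel_measurable_iff_le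
proof
  fix a :: real
  have "{x \<in> space borel. opt_cost_ext w x \<le> a} = {x \<in> Y. opt_cost w x \<le> a} \<union> (if 0 \<le> a then - Y else {})"
    by (auto simp: opt_cost_ext_def)
  also have "\<dots> \<in> sets borel"
    using closed_opt_cost_sublevel[OF assms] compact_imp_closed[OF compact_Y] by auto
  finally show "{x \<in> space borel. opt_cost_ext w x \<le> a} \<in> sets borel" .
qed

lemma abs_opt_cost_ext_le:
  assumes "weights w"
  shows "\<bar>opt_cost_ext w x\<bar> \<le> k_bound * suminf w"
proof -
  have "0 \<le> suminf w" using assms by (simp add: weights_def suminf_nonneg)
  then show ?thesis
    using abs_opt_cost_le[OF assms] k_bound(1) by (simp add: opt_cost_ext_def)
qed

lemma graph_G_subset: "graph_G U f Y \<subseteq> Y \<times> U0"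
  using U_subset by (auto simp: graph_G_def adm_set_def)

lemma borel_measurable_step:
  assumes "\<gamma> \<in> W_set U f Y"
  shows "(\<lambda>z. f (fst z) (snd z)) \<in> borel_measurable \<gamma>"
proof -
  have "continuous_on (graph_G U f Y) (\<lambda>(y, u). f y u)"
    by (rule continuous_on_subset[OF continuous_f]) (use graph_G_subset in auto)
  then show ?thesis
    by (intro W_set_borel_measurable_continuous[OF assms]) (simp add: case_prod_beta)
qed

lemma borel_measurable_fst:
  assumes "\<gamma> \<in> W_set U f Y"
  shows "fst \<in> borel_measurable \<gamma>"
  by (intro W_set_borel_measurable_continuous[OF assms] continuous_intros)

lemma distr_step_eq_distr_fst:
  assumes \<gamma>: "\<gamma> \<in> W_set U f Y"
  shows "distr \<gamma> borel (\<lambda>z. f (fst z) (snd z)) = distr \<gamma> borel fst"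
proof -
  interpret prob_space \<gamma> using W_setD(1)[OF \<gamma>] .
  note step = borel_measurable_step[OF \<gamma>] and fst = borel_measurable_fst[OF \<gamma>]
  show ?thesis
  proof (rule measure_eqI_integral_bounded_continuous)
    show "finite_measure (distr \<gamma> borel (\<lambda>z. f (fst z) (snd z)))" "finite_measure (distr \<gamma> borel fst)"
      using finite_measure_distr[OF step] finite_measure_distr[OF fst] .
    fix \<phi> :: "'m \<Rightarrow> real" assume cont: "continuous_on UNIV \<phi>" and bound: "\<And>x. \<bar>\<phi> x\<bar> \<le> 1"
    have \<phi>: "\<phi> \<in> borel_measurable borel" using borel_measurable_continuous_onI[OF cont] .
    have "integrable \<gamma> (\<lambda>z. \<phi> (g z))" if "g \<in> borel_measurable \<gamma>" for g
      using bound measurable_compose[OF that \<phi>] by (intro integrable_const_bound[where B=1]) auto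
    then have "(\<integral>z. \<phi> (f (fst z) (snd z)) \<partial>\<gamma>) - (\<integral>z. \<phi> (fst z) \<partial>\<gamma>)
        = (\<integral>z. \<phi> (f (fst z) (snd z)) - \<phi> (fst z) \<partial>\<gamma>)"
      using step fst by (intro Bochner_Integration.integral_diff[symmetric]) auto
    also have "\<dots> = 0" using W_setD(4)[OF \<gamma> continuous_on_subset[OF cont]] by simp
    finally show "(\<integral>x. \<phi> x \<partial>distr \<gamma> borel (\<lambda>z. f (fst z) (snd z))) = (\<integral>x. \<phi> x \<partial>distr \<gamma> borel fst)"
      using integral_distr[OF step \<phi>] integral_distr[OF fst \<phi>] by simp
  qed simp_all
qed

lemma integral_step_eq_integral_fst:
  assumes \<gamma>: "\<gamma> \<in> W_set U f Y" and h: "(h :: 'm \<Rightarrow> real) \<in> borel_measurable borel"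
  shows "(\<integral>z. h (f (fst z) (snd z)) \<partial>\<gamma>) = (\<integral>z. h (fst z) \<partial>\<gamma>)"
  using integral_distr[OF borel_measurable_step[OF \<gamma>] h] integral_distr[OF borel_measurable_fst[OF \<gamma>] h]
  by (simp add: distr_step_eq_distr_fst[OF \<gamma>])

lemma W_set_integrable_k:
  assumes \<gamma>: "\<gamma> \<in> W_set U f Y"
  shows "integrable \<gamma> (\<lambda>z. k (fst z) (snd z))"
proof -
  interpret prob_space \<gamma> using W_setD(1)[OF \<gamma>] .
  have "continuous_on (graph_G U f Y) (\<lambda>(y, u). k y u)"
    by (rule continuous_on_subset[OF continuous_k]) (use graph_G_subset in auto)
  then have "(\<lambda>z. k (fst z) (snd z)) \<in> borel_measurable \<gamma>"
    by (intro W_set_borel_measurable_continuous[OF \<gamma>]) (simp add: case_prod_beta)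
  moreover have "\<bar>k (fst z) (snd z)\<bar> \<le> k_bound" if "z \<in> space \<gamma>" for z
    using that graph_G_subset k_bound(2) by (auto simp: W_setD(2)[OF \<gamma>])
  ultimately show ?thesis by (intro integrable_const_bound[where B=k_bound]) auto
qed

lemma W_set_integrable_opt_cost_ext:
  assumes \<gamma>: "\<gamma> \<in> W_set U f Y" and w: "weights w" and g: "g \<in> borel_measurable \<gamma>"
  shows "integrable \<gamma> (\<lambda>z. opt_cost_ext w (g z))"
proof -
  interpret prob_space \<gamma> using W_setD(1)[OF \<gamma>] .
  show ?thesis
    using abs_opt_cost_ext_le[OF w] measurable_compose[OF g borel_measurable_opt_cost_ext[OF w]]
    by (intro integrable_const_bound[where B="k_bound * suminf w"]) auto
qed

lemma integral_opt_cost_bellman: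
  assumes \<gamma>: "\<gamma> \<in> W_set U f Y"
    and w: "weights w" and w': "weights w'" and "c \<ge> 0" and shift: "\<And>t. w (Suc t) = c * w' t"
  shows "(\<integral>z. opt_cost_ext w (fst z) \<partial>\<gamma>)
    \<le> w 0 * (\<integral>z. k (fst z) (snd z) \<partial>\<gamma>) + c * (\<integral>z. opt_cost_ext w' (fst z) \<partial>\<gamma>)"
proof -
  note int_k = W_set_integrable_k[OF \<gamma>]
  note int_next = W_set_integrable_opt_cost_ext[OF \<gamma> w' borel_measurable_step[OF \<gamma>]]
  have "(\<integral>z. opt_cost_ext w (fst z) \<partial>\<gamma>)
      \<le> (\<integral>z. w 0 * k (fst z) (snd z) + c * opt_cost_ext w' (f (fst z) (snd z)) \<partial>\<gamma>)"
  proof (rule integral_mono)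
    fix z assume "z \<in> space \<gamma>"
    then have z: "fst z \<in> Y" "snd z \<in> adm_set U f Y (fst z)"
      by (auto simp: W_setD(2)[OF \<gamma>] graph_G_def)
    then show "opt_cost_ext w (fst z) \<le> w 0 * k (fst z) (snd z) + c * opt_cost_ext w' (f (fst z) (snd z))"
      using opt_cost_bellman[OF w w' \<open>c \<ge> 0\<close> shift z] by (simp add: opt_cost_ext_def adm_set_def)
  qed (use int_k int_next W_set_integrable_opt_cost_ext[OF \<gamma> w borel_measurable_fst[OF \<gamma>]] in auto)
  also have "\<dots> = w 0 * (\<integral>z. k (fst z) (snd z) \<partial>\<gamma>) + c * (\<integral>z. opt_cost_ext w' (f (fst z) (snd z)) \<partial>\<gamma>)"
    using int_k int_next by simp
  also have "(\<integral>z. opt_cost_ext w' (f (fst z) (snd z)) \<partial>\<gamma>) = (\<integral>z. opt_cost_ext w' (fst z) \<partial>\<gamma>)"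
    by (rule integral_step_eq_integral_fst[OF \<gamma> borel_measurable_opt_cost_ext[OF w']])
  finally show ?thesis .
qed

definition horizon :: "nat \<Rightarrow> nat \<Rightarrow> real" where
  "horizon T t = (if t < T then 1 else 0)"

lemma weights_horizon: "weights (horizon T)"
  unfolding weights_def horizon_def by (auto intro!: summable_finite[of "{..<T}"])

lemma cost_horizon: "cost (horizon T) ys us = (\<Sum>t<T. k (ys t) (us t))"
  unfolding cost_def horizon_def by (subst suminf_finite[of "{..<T}"]) auto

lemma integral_opt_cost_horizon_le:
  assumes \<gamma>: "\<gamma> \<in> W_set U f Y"
  shows "(\<integral>z. opt_cost_ext (horizon T) (fst z) \<partial>\<gamma>) \<le> real T * (\<integral>z. k (fst z) (snd z) \<partial>\<gamma>)"
proof (induction T)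
  case 0
  have "opt_cost_ext (horizon 0) x = 0" for x
  proof (cases "x \<in> Y")
    case True
    have "(\<lambda>(ys, us). cost (horizon 0) ys us) ` adm_proc x = {0}"
      using adm_proc_nonempty[OF True] by (auto simp: cost_horizon)
    then show ?thesis using True by (simp add: opt_cost_ext_def opt_cost_def)
  qed (simp add: opt_cost_ext_def)
  then show ?case by simp
next
  case (Suc T)
  have "(\<integral>z. opt_cost_ext (horizon (Suc T)) (fst z) \<partial>\<gamma>)
      \<le> horizon (Suc T) 0 * (\<integral>z. k (fst z) (snd z) \<partial>\<gamma>) + 1 * (\<integral>z. opt_cost_ext (horizon T) (fst z) \<partial>\<gamma>)"
    by (rule integral_opt_cost_bellman[OF \<gamma> weights_horizon weights_horizon]) (auto simp: horizon_def)
  then show ?case using Suc by (simp add: horizon_def[of "Suc T" 0] algebra_simps)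
qed

lemma adm_proc_extend:
  assumes "y0 \<in> Y" "y 0 = y0"
    and adm: "\<And>t. t < T \<Longrightarrow> u t \<in> adm_set U f Y (y t) \<and> y (Suc t) = f (y t) (u t)"
  obtains ys us where "(ys, us) \<in> adm_proc y0" "\<And>t. t < T \<Longrightarrow> ys t = y t \<and> us t = u t"
proof -
  have "y t \<in> Y" if "t \<le> T" for t
    using that
  proof (induction t)
    case (Suc t)
    then show ?case using adm[of t] by (simp add: adm_set_def)
  qed (use assms in simp)
  then obtain ys' us' where p: "(ys', us') \<in> adm_proc (y T)"
    using adm_proc_nonempty[of "y T"] by auto
  define ys where "ys t = (if t \<le> T then y t else ys' (t - T))" for t
  define us where "us t = (if t < T then u t else us' (t - T))" for t
  have "us t \<in> adm_set U f Y (ys t) \<and> ys (Suc t) = f (ys t) (us t)" for t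
  proof (cases "t < T")
    case True
    then show ?thesis using adm[OF True] by (simp add: ys_def us_def)
  next
    case False
    have "ys t = ys' (t - T)"
      using False p by (cases "t = T") (simp_all add: ys_def adm_proc_def)
    moreover have "Suc t - T = Suc (t - T)" using False by simp
    ultimately show ?thesis using False p by (simp add: ys_def us_def adm_proc_def)
  qed
  then have "(ys, us) \<in> adm_proc y0" using assms(2) by (simp add: adm_proc_def ys_def)
  then show ?thesis using that by (simp add: ys_def us_def)
qed

lemma V_T_eq_opt_cost:
  assumes "y0 \<in> Y"
  shows "V_T U f k Y T y0 = opt_cost (horizon T) y0 / T"
proof -
  have "{(\<Sum>t<T. k (y t) (u t)) | y u.
      y 0 = y0 \<and> (\<forall>t<T. u t \<in> adm_set U f Y (y t) \<and> y (Suc t) = f (y t) (u t))}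
    = (\<lambda>(ys, us). cost (horizon T) ys us) ` adm_proc y0" (is "?A = ?B")
  proof
    show "?B \<subseteq> ?A"
    proof
      fix x assume "x \<in> ?B"
      then obtain ys us where p: "(ys, us) \<in> adm_proc y0" and x: "x = cost (horizon T) ys us" by auto
      show "x \<in> ?A" unfolding mem_Collect_eq
        by (intro exI[of _ ys] exI[of _ us]) (use p in \<open>simp add: x cost_horizon adm_proc_def\<close>)
    qed
    show "?A \<subseteq> ?B"
    proof
      fix x assume "x \<in> ?A"
      then obtain y u where x: "x = (\<Sum>t<T. k (y t) (u t))" and "y 0 = y0"
        and adm: "\<forall>t<T. u t \<in> adm_set U f Y (y t) \<and> y (Suc t) = f (y t) (u t)" by auto
      obtain ys us where p: "(ys, us) \<in> adm_proc y0" and eq: "\<And>t. t < T \<Longrightarrow> ys t = y t \<and> us t = u t"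
        by (rule adm_proc_extend[where y = y and u = u and T = T, OF assms \<open>y 0 = y0\<close>]) (use adm in auto)
      have "x = cost (horizon T) ys us" unfolding x cost_horizon using eq by (intro sum.cong) auto
      with p show "x \<in> ?B" by (auto intro: rev_image_eqI)
    qed
  qed
  then show ?thesis by (simp add: V_T_def opt_cost_def)
qed

lemma h_disc_eq_opt_cost: "h_disc U f k Y \<alpha> y0 = (1 - \<alpha>) * opt_cost (\<lambda>t. \<alpha> ^ t) y0"
proof -
  have "{(\<Sum>t. \<alpha> ^ t * k (y t) (u t)) | y u.
      y 0 = y0 \<and> (\<forall>t. u t \<in> adm_set U f Y (y t) \<and> y (Suc t) = f (y t) (u t))}
    = (\<lambda>(ys, us). cost (\<lambda>t. \<alpha> ^ t) ys us) ` adm_proc y0"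
    unfolding cost_def adm_proc_def by (auto simp: image_def)
  then show ?thesis by (simp add: h_disc_def opt_cost_def)
qed

lemma integral_V_T_le:
  assumes \<gamma>: "\<gamma> \<in> W_set U f Y" and "T \<ge> 1"
  shows "(\<integral>z. V_T U f k Y T (fst z) \<partial>\<gamma>) \<le> (\<integral>z. k (fst z) (snd z) \<partial>\<gamma>)"
proof -
  have "(\<integral>z. V_T U f k Y T (fst z) \<partial>\<gamma>) = (\<integral>z. opt_cost_ext (horizon T) (fst z) \<partial>\<gamma>) / T"
    by (subst integral_divide_zero[symmetric], rule Bochner_Integration.integral_cong)
       (auto simp: W_setD(2)[OF \<gamma>] graph_G_def opt_cost_ext_def V_T_eq_opt_cost)
  also have "\<dots> \<le> (\<integral>z. k (fst z) (snd z) \<partial>\<gamma>)"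
    using integral_opt_cost_horizon_le[OF \<gamma>, of T] \<open>T \<ge> 1\<close> by (simp add: divide_le_eq mult.commute)
  finally show ?thesis .
qed

lemma integral_h_disc_le:
  assumes \<gamma>: "\<gamma> \<in> W_set U f Y" and "0 < \<alpha>" "\<alpha> < 1"
  shows "(\<integral>z. h_disc U f k Y \<alpha> (fst z) \<partial>\<gamma>) \<le> (\<integral>z. k (fst z) (snd z) \<partial>\<gamma>)"
proof -
  have w: "weights (\<lambda>t. \<alpha> ^ t)" using assms by (simp add: weights_def)
  have "(\<integral>z. h_disc U f k Y \<alpha> (fst z) \<partial>\<gamma>) = (1 - \<alpha>) * (\<integral>z. opt_cost_ext (\<lambda>t. \<alpha> ^ t) (fst z) \<partial>\<gamma>)"
    by (subst integral_mult_right_zero[symmetric], rule Bochner_Integration.integral_cong)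
       (auto simp: W_setD(2)[OF \<gamma>] graph_G_def opt_cost_ext_def h_disc_eq_opt_cost)
  also have "\<dots> \<le> (\<integral>z. k (fst z) (snd z) \<partial>\<gamma>)"
    using integral_opt_cost_bellman[OF \<gamma> w w, of \<alpha>] assms(2) by (simp add: algebra_simps)
  finally show ?thesis .
qed

end

theorem lemma3p2:
  fixes Y :: "'m::euclidean_space set"
    and U0 :: "'u::metric_space set"
    and U :: "'m \<Rightarrow> 'u set"
    and f :: "'m \<Rightarrow> 'u \<Rightarrow> 'm"
    and k :: "'m \<Rightarrow> 'u \<Rightarrow> real"
  assumes "Y \<noteq> {}" and "compact Y"
    and "compact U0"
    and "\<And>y. y \<in> Y \<Longrightarrow> U y \<subseteq> U0 \<and> compact (U y)"
    and "usc_on Y U"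
    and "continuous_on (UNIV \<times> U0) (\<lambda>(y, u). f y u)"
    and "continuous_on (UNIV \<times> U0) (\<lambda>(y, u). k y u)"
    and "\<And>y. y \<in> Y \<Longrightarrow> adm_set U f Y y \<noteq> {}"
  shows "(\<forall>T::nat. T \<ge> 1 \<longrightarrow> (\<forall>\<gamma> \<in> W_set U f Y.
            (\<integral>z. V_T U f k Y T (fst z) \<partial>\<gamma>) \<le> (\<integral>z. k (fst z) (snd z) \<partial>\<gamma>)))
       \<and> (\<forall>\<alpha>::real. 0 < \<alpha> \<and> \<alpha> < 1 \<longrightarrow> (\<forall>\<gamma> \<in> W_set U f Y.
            (\<integral>z. h_disc U f k Y \<alpha> (fst z) \<partial>\<gamma>) \<le> (\<integral>z. k (fst z) (snd z) \<partial>\<gamma>)))"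
proof -
  interpret control_system Y U0 U f k
    using assms by unfold_locales auto
  show ?thesis using integral_V_T_le integral_h_disc_le by blast
qed

end
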